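(* Let $(k_1,\dots,k_n) \in \mathbb{Z}_{\geq 1}^n$ and $i \in \mathbb{Z}_{\geq 2}$. Then $$\dim_{\mathbb{F}_2} \widetilde{\mathrm{Gov}}(V_{[k_1,\dots,k_n]}, i) = (k_1+\dots+k_n)\binom{n-1}{i-1} - \binom{n}{i}.$$
   Context: Let $m = k_1+\dots+k_n$, $V_{[k_1,\dots,k_n]} = \mathbb{F}_2^m$ with basis $e_1,\dots,e_m$ and dual basis $\chi_1,\dots,\chi_m$. For $h \in [n]$ let $f(h) = \{k_1+\dots+k_{h-1}+1,\dots,k_1+\dots+k_h\}$ (the $h$-th block), and for a subset $T \subseteq [m]$ put $f(T) = T$. For $A \subseteq [n]$ with $\#A = i \geq 2$, $x \in A$ and $T \subseteq f(x)$, regard $T$ as a new symbol and set $$\widetilde{\phi}_{(A,T)} = \sum_{\tau} \Big(\sum_{y_1 \in f(\tau(1))}\chi_{y_1}\Big)\otimes\cdots\otimes\Big(\sum_{y_i \in f(\tau(i))}\chi_{y_i}\Big),$$ the sum over bijections $\tau:\{1,\dots,i\} \to (A\setminus\{x\})\cup\{T\}$ with $\tau(i-1) = T$ or $\tau(i) = T$; here $\psi_1\otimes\cdots\otimes\psi_i$ denotes the multilinear map $(\sigma_1,\dots,\sigma_i)\mapsto\prod_s\psi_s(\sigma_s)$ on $(\mathbb{F}_2^m)^i$. $\widetilde{\mathrm{Gov}}(V_{[k_1,\dots,k_n]}, i)$ is the span of all $\widetilde{\phi}_{(A,T)}$ with $A \subseteq [n]$, $\#A = i$, $x \in A$, $T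 \subseteq f(x)$. *)

theory Defs
  imports Complex_Main "HOL-Library.Z2" "HOL-Library.Function_Algebras" "HOL-Library.FuncSet"
begin

text \<open>F_2 is the field type bit. A tuple (sigma_1,...,sigma_i) of vectors in F_2^m is
  encoded as sig :: nat => nat => bit, with sig s y the y-th coordinate (y in 1..m)
  of sigma_s (s in 1..i). Multilinear maps are functions of such tuples into bit.\<close>

type_synonym mlmap = "(nat \<Rightarrow> nat \<Rightarrow> bit) \<Rightarrow> bit"

definition mscale :: "bit \<Rightarrow> mlmap \<Rightarrow> mlmap" where
  "mscale c \<phi> = (\<lambda>sig. c * \<phi> sig)"

definition block :: "(nat \<Rightarrow> nat) \<Rightarrow> nat \<Rightarrow> nat set" where
  "block k h = {(\<Sum>j\<in>{1..<h}. k j) + 1 .. (\<Sum>j\<in>{1..h}. k j)}"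

text \<open>Symbols: Inl h for a block index h, Inr T for a new symbol T (a subset of [m]);
  f(Inl h) = block h, f(Inr T) = T.\<close>
definition fsym :: "(nat \<Rightarrow> nat) \<Rightarrow> nat + nat set \<Rightarrow> nat set" where
  "fsym k z = (case z of Inl h \<Rightarrow> block k h | Inr T \<Rightarrow> T)"

definition chisum :: "nat set \<Rightarrow> (nat \<Rightarrow> bit) \<Rightarrow> bit" where
  "chisum Y v = (\<Sum>y\<in>Y. v y)"

definition taus :: "nat \<Rightarrow> nat set \<Rightarrow> nat \<Rightarrow> nat set \<Rightarrow> (nat \<Rightarrow> nat + nat set) set" where
  "taus i A x T =
     {\<tau>. \<tau> \<in> {1..i} \<rightarrow>\<^sub>E (Inl ` (A - {x}) \<union> {Inr T})
         \<and> bij_betw \<tau> {1..i} (Inl ` (A - {x}) \<union> {Inr T})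
         \<and> (\<tau> (i - 1) = Inr T \<or> \<tau> i = Inr T)}"

definition phi_tilde :: "(nat \<Rightarrow> nat) \<Rightarrow> nat \<Rightarrow> nat set \<Rightarrow> nat \<Rightarrow> nat set \<Rightarrow> mlmap" where
  "phi_tilde k i A x T =
     (\<lambda>sig. \<Sum>\<tau>\<in>taus i A x T. \<Prod>s\<in>{1..i}. chisum (fsym k (\<tau> s)) (sig s))"

definition Gov_tilde :: "(nat \<Rightarrow> nat) \<Rightarrow> nat \<Rightarrow> nat \<Rightarrow> mlmap set" where
  "Gov_tilde k n i = module.span mscale
     {phi_tilde k i A x T | A x T. A \<subseteq> {1..n} \<and> card A = i \<and> x \<in> A \<and> T \<subseteq> block k x}"

end

theory Submission
  imports Defs
begin

text \<open>Writing each bijection \<tau> as an arrangement \<sigma> of A with x in position i - 1 or i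
  shows that \<phi>~(A,x,T) is additive in T, so the space is spanned by the \<phi>~(A,x,{t}) with
  x \<in> A and t \<in> f(x). For fixed A these satisfy one relation: their sum is
  \<Sum>x\<in>A. \<phi>~(A,x,f(x)), in which every arrangement of A occurs twice, once for
  x = \<sigma>(i - 1) and once for x = \<sigma>(i), so it vanishes over F_2. Dropping one pivot pair (x,t)
  for each A leaves a basis: evaluated at unit vectors e_{y_1}, ..., e_{y_i} with y_s in the
  block of \<sigma>(s), where \<sigma> is an arrangement of A ending with u, v, only the generators
  (A, u, y_{i-1}) and (A, v, y_i) are nonzero. Hence in a vanishing combination all coefficients
  belonging to A agree with the pivot's, which is 0. The dimension is therefore
  \<Sum>A. (\<Sum>x\<in>A. k_x) - 1.\<close>

lemma sum_fun_apply: "(\<Sum>a\<in>A. f a) z = (\<Sum>a\<in>A. f a z)"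
  by (induction A rule: infinite_finite_induct) auto

lemma prod_of_bool:
  "finite S \<Longrightarrow> (\<Prod>s\<in>S. of_bool (P s) :: 'a::comm_semiring_1) = of_bool (\<forall>s\<in>S. P s)"
  by (induction S rule: finite_induct) auto

lemma (in vector_space) inj_on_and_independent_image:
  assumes "finite J"
    and vanish: "\<And>c. (\<Sum>q\<in>J. c q *s g q) = 0 \<Longrightarrow> \<forall>q\<in>J. c q = 0"
  shows "inj_on g J" "independent (g ` J)"
proof -
  show inj: "inj_on g J"
  proof (rule inj_onI, rule ccontr)
    fix p q assume pq: "p \<in> J" "q \<in> J" "g p = g q" "p \<noteq> q"
    define c where "c r = (if r = p then 1 else if r = q then - 1 else (0::'a))" for r
    have "(\<Sum>r\<in>J. c r *s g r) = (\<Sum>r\<in>{p, q}. c r *s g r)"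
      using pq assms(1) by (intro sum.mono_neutral_right) (auto simp: c_def)
    also have "\<dots> = g p - g q"
      using pq(4) by (simp add: c_def)
    also have "\<dots> = 0"
      using pq(3) by simp
    finally have "c p = 0"
      using vanish pq(1) by blast
    then show False
      using pq(4) by (simp add: c_def)
  qed
  show "independent (g ` J)"
  proof (rule independent_if_scalars_zero)
    show "finite (g ` J)" using assms(1) by simp
  next
    fix f v assume sum: "(\<Sum>v\<in>g ` J. f v *s v) = 0" and v: "v \<in> g ` J"
    have "(\<Sum>q\<in>J. f (g q) *s g q) = 0"
      using sum by (simp add: sum.reindex[OF inj])
    then show "f v = 0"
      using vanish[of "f \<circ> g"] v by auto
  qed
qed

lemma card_subsets_containing:
  assumes "finite S" "h \<in> S" "i \<ge> 1"
  shows "card {A. A \<subseteq> S \<and> card A = i \<and> h \<in> A} = (card S - 1) choose (i - 1)"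
proof -
  have "bij_betw (\<lambda>A. A - {h}) {A. A \<subseteq> S \<and> card A = i \<and> h \<in> A} {B. B \<subseteq> S - {h} \<and> card B = i - 1}"
  proof (rule bij_betw_byWitness[where f' = "insert h"])
    show "(\<lambda>A. A - {h}) ` {A. A \<subseteq> S \<and> card A = i \<and> h \<in> A} \<subseteq> {B. B \<subseteq> S - {h} \<and> card B = i - 1}"
      using assms(1) by (auto simp: finite_subset)
    show "insert h ` {B. B \<subseteq> S - {h} \<and> card B = i - 1} \<subseteq> {A. A \<subseteq> S \<and> card A = i \<and> h \<in> A}"
      using assms by (auto simp: card_insert_if finite_subset)
  qed auto
  then have "card {A. A \<subseteq> S \<and> card A = i \<and> h \<in> A} = card {B. B \<subseteq> S - {h} \<and> card B = i - 1}"
    by (rule bij_betw_same_card)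
  also have "\<dots> = (card S - 1) choose (i - 1)"
    using assms(1,2) by (simp add: n_subsets)
  finally show ?thesis .
qed

lemma sum_sum_subsets_of_card:
  fixes f :: "'a \<Rightarrow> nat"
  assumes "finite S" "i \<ge> 1"
  shows "(\<Sum>A | A \<subseteq> S \<and> card A = i. \<Sum>x\<in>A. f x) = (\<Sum>x\<in>S. f x) * ((card S - 1) choose (i - 1))"
proof -
  let ?Sub = "{A. A \<subseteq> S \<and> card A = i}"
  have "finite ?Sub"
    by (rule finite_subset[of _ "Pow S"]) (auto simp: assms(1))
  have "(\<Sum>A\<in>?Sub. \<Sum>x\<in>A. f x) = (\<Sum>A\<in>?Sub. \<Sum>x\<in>S. if x \<in> A then f x else 0)"
  proof (rule sum.cong[OF refl])
    fix A assume "A \<in> ?Sub"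
    then have "S \<inter> A = A" by blast
    then show "(\<Sum>x\<in>A. f x) = (\<Sum>x\<in>S. if x \<in> A then f x else 0)"
      using sum.inter_restrict[OF assms(1), of f A] by simp
  qed
  also have "\<dots> = (\<Sum>x\<in>S. \<Sum>A\<in>?Sub. if x \<in> A then f x else 0)"
    by (rule sum.swap)
  also have "\<dots> = (\<Sum>x\<in>S. f x * ((card S - 1) choose (i - 1)))"
  proof (rule sum.cong[OF refl])
    fix x assume "x \<in> S"
    have "(\<Sum>A\<in>?Sub. if x \<in> A then f x else 0) = card {A \<in> ?Sub. x \<in> A} * f x"
      using \<open>finite ?Sub\<close> by (simp add: sum.inter_filter[symmetric])
    also have "{A \<in> ?Sub. x \<in> A} = {A. A \<subseteq> S \<and> card A = i \<and> x \<in> A}"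
      by auto
    finally show "(\<Sum>A\<in>?Sub. if x \<in> A then f x else 0) = f x * ((card S - 1) choose (i - 1))"
      using card_subsets_containing[OF assms(1) \<open>x \<in> S\<close> assms(2)] by simp
  qed
  finally show ?thesis
    by (simp add: sum_distrib_right)
qed

interpretation mlmaps: vector_space mscale
  by unfold_locales (auto simp: mscale_def fun_eq_iff algebra_simps)

lemma bit_add_self: "(c::bit) + c = 0"
  by (cases c) simp_all

lemma bit_eq_if_add_eq_0: "(a::bit) + b = 0 \<Longrightarrow> a = b"
  by (cases a; cases b) auto

lemma fun_bit_add_self: "(f::'a \<Rightarrow> bit) + f = 0"
  by (simp add: fun_eq_iff bit_add_self)

lemma fun_bit_eq_if_add_eq_0:
  assumes "(f::'a \<Rightarrow> bit) + g = 0"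
  shows "f = g"
proof
  fix sig
  have "f sig + g sig = 0"
    using fun_cong[OF assms, of sig] by simp
  then show "f sig = g sig"
    by (rule bit_eq_if_add_eq_0)
qed

definition chi_tensor :: "nat \<Rightarrow> (nat \<Rightarrow> nat set) \<Rightarrow> mlmap" where
  "chi_tensor i Y = (\<lambda>sig. \<Prod>s\<in>{1..i}. chisum (Y s) (sig s))"

lemma chi_tensor_cong:
  "(\<And>s. s \<in> {1..i} \<Longrightarrow> Y s = Z s) \<Longrightarrow> chi_tensor i Y = chi_tensor i Z"
  unfolding chi_tensor_def by (intro ext prod.cong) auto

lemma chi_tensor_upd_eq_sum:
  assumes p: "p \<in> {1..i}" and "finite T"
  shows "chi_tensor i (Y(p := T)) = (\<Sum>t\<in>T. chi_tensor i (Y(p := {t})))"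
proof
  fix sig
  let ?rest = "\<Prod>s\<in>{1..i} - {p}. chisum (Y s) (sig s)"
  have split: "chi_tensor i (Y(p := Z)) sig = chisum Z (sig p) * ?rest" for Z
    unfolding chi_tensor_def using p by (simp add: prod.remove)
  have "chisum {t} v = v t" for t v
    by (simp add: chisum_def)
  then show "chi_tensor i (Y(p := T)) sig = (\<Sum>t\<in>T. chi_tensor i (Y(p := {t}))) sig"
    by (simp only: split sum_fun_apply chisum_def sum_distrib_right)
qed

definition unit_tuple :: "(nat \<Rightarrow> nat) \<Rightarrow> nat \<Rightarrow> nat \<Rightarrow> bit" where
  "unit_tuple y = (\<lambda>s z. if z = y s then 1 else 0)"

lemma chi_tensor_unit_tuple:
  assumes "\<And>s. finite (Y s)"
  shows "chi_tensor i Y (unit_tuple y) = of_bool (\<forall>s\<in>{1..i}. y s \<in> Y s)"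
proof -
  have "chisum (Y s) (unit_tuple y s) = of_bool (y s \<in> Y s)" for s
    using assms by (simp add: chisum_def unit_tuple_def)
  then show ?thesis
    by (simp add: chi_tensor_def prod_of_bool)
qed

definition block_start :: "(nat \<Rightarrow> nat) \<Rightarrow> nat \<Rightarrow> nat" where
  "block_start k h = (\<Sum>j\<in>{1..<h}. k j) + 1"

lemma block_eq_interval:
  assumes "h \<ge> 1"
  shows "block k h = {block_start k h ..< block_start k h + k h}"
proof -
  have "{1..h} = insert h {1..<h}" using assms by auto
  then have "(\<Sum>j\<in>{1..h}. k j) = k h + (\<Sum>j\<in>{1..<h}. k j)" by simp
  then show ?thesis by (auto simp: block_def block_start_def)
qed

lemma finite_block [simp]: "finite (block k h)"
  by (simp add: block_def)

lemma card_block: "h \<ge> 1 \<Longrightarrow> card (block k h) = k h"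
  by (simp add: block_eq_interval)

lemma block_start_mem: "h \<ge> 1 \<Longrightarrow> k h \<ge> 1 \<Longrightarrow> block_start k h \<in> block k h"
  by (simp add: block_eq_interval)

lemma block_disjoint:
  assumes "t \<in> block k h" "t \<in> block k h'"
  shows "h = h'"
proof -
  have "t \<notin> block k a \<inter> block k b" if "a < b" for a b
  proof -
    have "(\<Sum>j\<in>{1..a}. k j) \<le> (\<Sum>j\<in>{1..<b}. k j)"
      using that by (intro sum_mono2) auto
    then show ?thesis by (auto simp: block_def)
  qed
  then show ?thesis
    using assms by (metis IntI linorder_neqE_nat)
qed

text \<open>An arrangement is a \<tau> from \<^const>\<open>taus\<close> with the new symbol T renamed back to x.\<close>

definition arrangements :: "nat \<Rightarrow> nat set \<Rightarrow> nat \<Rightarrow> (nat \<Rightarrow> nat) set" where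
  "arrangements i A x =
     {\<sigma> \<in> {1..i} \<rightarrow>\<^sub>E A. bij_betw \<sigma> {1..i} A \<and> (\<sigma> (i - 1) = x \<or> \<sigma> i = x)}"

lemma finite_arrangements: "finite A \<Longrightarrow> finite (arrangements i A x)"
  by (rule finite_subset[of _ "{1..i} \<rightarrow>\<^sub>E A"]) (auto simp: arrangements_def finite_PiE)

definition symbol_of :: "nat \<Rightarrow> nat set \<Rightarrow> nat \<Rightarrow> nat + nat set" where
  "symbol_of x T h = (if h = x then Inr T else Inl h)"

lemma bij_betw_arrangements_taus:
  assumes "x \<in> A" "i \<ge> 2"
  shows "bij_betw (\<lambda>\<sigma>. restrict (symbol_of x T \<circ> \<sigma>) {1..i}) (arrangements i A x) (taus i A x T)"
proof -
  let ?B = "Inl ` (A - {x}) \<union> {Inr T}"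
  define \<rho>' where "\<rho>' z = (case z of Inl h \<Rightarrow> h | Inr _ \<Rightarrow> x)" for z :: "nat + nat set"
  have \<rho>: "bij_betw (symbol_of x T) A ?B"
    by (rule bij_betw_byWitness[where f'=\<rho>']) (use assms(1) in \<open>auto simp: symbol_of_def \<rho>'_def\<close>)
  have \<rho>': "bij_betw \<rho>' ?B A"
    by (rule bij_betw_byWitness[where f'="symbol_of x T"])
      (use assms(1) in \<open>auto simp: symbol_of_def \<rho>'_def\<close>)
  have ends: "i - 1 \<in> {1..i}" "i \<in> {1..i}" using assms(2) by auto
  show ?thesis
  proof (rule bij_betw_byWitness[where f' = "\<lambda>\<tau>. restrict (\<rho>' \<circ> \<tau>) {1..i}"])
    show "\<forall>\<sigma>\<in>arrangements i A x. restrict (\<rho>' \<circ> restrict (symbol_of x T \<circ> \<sigma>) {1..i}) {1..i} = \<sigma>"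
      by (auto simp: arrangements_def fun_eq_iff symbol_of_def \<rho>'_def PiE_def extensional_def)
    show "\<forall>\<tau>\<in>taus i A x T. restrict (symbol_of x T \<circ> restrict (\<rho>' \<circ> \<tau>) {1..i}) {1..i} = \<tau>"
      using assms(1)
      by (auto simp: taus_def fun_eq_iff symbol_of_def \<rho>'_def PiE_def extensional_def Pi_def)
    show "(\<lambda>\<sigma>. restrict (symbol_of x T \<circ> \<sigma>) {1..i}) ` arrangements i A x \<subseteq> taus i A x T"
    proof clarify
      fix \<sigma> assume \<sigma>: "\<sigma> \<in> arrangements i A x"
      then have "bij_betw (symbol_of x T \<circ> \<sigma>) {1..i} ?B"
        using \<rho> by (auto simp: arrangements_def intro: bij_betw_trans)
      then have "bij_betw (restrict (symbol_of x T \<circ> \<sigma>) {1..i}) {1..i} ?B"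
        by (rule bij_betw_cong[THEN iffD1, rotated]) simp
      moreover have "restrict (symbol_of x T \<circ> \<sigma>) {1..i} \<in> {1..i} \<rightarrow>\<^sub>E ?B"
        using \<sigma> \<rho> by (auto simp: arrangements_def bij_betw_def)
      ultimately show "restrict (symbol_of x T \<circ> \<sigma>) {1..i} \<in> taus i A x T"
        using \<sigma> ends by (auto simp: taus_def arrangements_def symbol_of_def)
    qed
    show "(\<lambda>\<tau>. restrict (\<rho>' \<circ> \<tau>) {1..i}) ` taus i A x T \<subseteq> arrangements i A x"
    proof clarify
      fix \<tau> assume \<tau>: "\<tau> \<in> taus i A x T"
      then have bij: "bij_betw (\<rho>' \<circ> \<tau>) {1..i} A"
        using \<rho>' by (auto simp: taus_def intro: bij_betw_trans)
      then have "bij_betw (restrict (\<rho>' \<circ> \<tau>) {1..i}) {1..i} A"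
        by (rule bij_betw_cong[THEN iffD1, rotated]) simp
      moreover have "restrict (\<rho>' \<circ> \<tau>) {1..i} \<in> {1..i} \<rightarrow>\<^sub>E A"
        using bij_betw_imp_funcset[OF bij] by auto
      moreover have "\<tau> (i - 1) \<in> ?B" "\<tau> i \<in> ?B"
        using \<tau> ends by (auto simp: taus_def PiE_def Pi_def)
      ultimately show "restrict (\<rho>' \<circ> \<tau>) {1..i} \<in> arrangements i A x"
        using \<tau> ends by (auto simp: taus_def arrangements_def \<rho>'_def)
    qed
  qed
qed

lemma phi_tilde_eq_sum_arrangements:
  assumes "x \<in> A" "i \<ge> 2"
  shows "phi_tilde k i A x T = (\<Sum>\<sigma>\<in>arrangements i A x. chi_tensor i ((block k)(x := T) \<circ> \<sigma>))"
proof -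
  have "phi_tilde k i A x T = (\<Sum>\<tau>\<in>taus i A x T. chi_tensor i (fsym k \<circ> \<tau>))"
    by (simp add: phi_tilde_def chi_tensor_def fun_eq_iff sum_fun_apply)
  also have "\<dots> = (\<Sum>\<sigma>\<in>arrangements i A x. chi_tensor i (fsym k \<circ> restrict (symbol_of x T \<circ> \<sigma>) {1..i}))"
    by (rule sum.reindex_bij_betw[OF bij_betw_arrangements_taus[OF assms], symmetric])
  also have "\<dots> = (\<Sum>\<sigma>\<in>arrangements i A x. chi_tensor i ((block k)(x := T) \<circ> \<sigma>))"
    by (intro sum.cong chi_tensor_cong) (auto simp: fsym_def symbol_of_def)
  finally show ?thesis .
qed

lemma chi_tensor_arrangement_eq_upd:
  assumes "\<sigma> \<in> arrangements i A x" "x \<in> A"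
  obtains p where "p \<in> {1..i}"
    "\<And>T. chi_tensor i ((block k)(x := T) \<circ> \<sigma>) = chi_tensor i ((block k \<circ> \<sigma>)(p := T))"
proof -
  have bij: "bij_betw \<sigma> {1..i} A" using assms(1) by (simp add: arrangements_def)
  then obtain p where p: "p \<in> {1..i}" "\<sigma> p = x"
    using assms(2) by (metis bij_betw_iff_bijections)
  have "\<sigma> s = x \<longleftrightarrow> s = p" if "s \<in> {1..i}" for s
    using bij p that by (auto simp: bij_betw_def dest: inj_onD)
  then have "((block k)(x := T) \<circ> \<sigma>) s = ((block k \<circ> \<sigma>)(p := T)) s" if "s \<in> {1..i}" for s T
    using that by simp
  then show ?thesis
    by (intro that[OF p(1)] chi_tensor_cong)
qed

lemma phi_tilde_eq_sum_singletons:
  assumes "x \<in> A" "i \<ge> 2" "finite T"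
  shows "phi_tilde k i A x T = (\<Sum>t\<in>T. phi_tilde k i A x {t})"
proof -
  have "phi_tilde k i A x T = (\<Sum>\<sigma>\<in>arrangements i A x. chi_tensor i ((block k)(x := T) \<circ> \<sigma>))"
    using assms(1,2) by (rule phi_tilde_eq_sum_arrangements)
  also have "\<dots> = (\<Sum>\<sigma>\<in>arrangements i A x. \<Sum>t\<in>T. chi_tensor i ((block k)(x := {t}) \<circ> \<sigma>))"
  proof (rule sum.cong[OF refl])
    fix \<sigma> assume "\<sigma> \<in> arrangements i A x"
    then obtain p where "p \<in> {1..i}"
      "\<And>T. chi_tensor i ((block k)(x := T) \<circ> \<sigma>) = chi_tensor i ((block k \<circ> \<sigma>)(p := T))"
      using chi_tensor_arrangement_eq_upd assms(1) by blast
    then show "chi_tensor i ((block k)(x := T) \<circ> \<sigma>)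
        = (\<Sum>t\<in>T. chi_tensor i ((block k)(x := {t}) \<circ> \<sigma>))"
      using chi_tensor_upd_eq_sum assms(3) by presburger
  qed
  also have "\<dots> = (\<Sum>t\<in>T. phi_tilde k i A x {t})"
    using assms by (simp only: sum.swap[of _ "arrangements i A x"] phi_tilde_eq_sum_arrangements)
  finally show ?thesis .
qed

text \<open>Every arrangement \<sigma> of A is counted twice, for x = \<sigma> (i - 1) and for x = \<sigma> i.\<close>

lemma sum_phi_tilde_blocks_eq_0:
  assumes "finite A" "i \<ge> 2"
  shows "(\<Sum>x\<in>A. phi_tilde k i A x (block k x)) = 0"
proof -
  define P where "P = {\<sigma> \<in> {1..i} \<rightarrow>\<^sub>E A. bij_betw \<sigma> {1..i} A}"
  let ?H = "\<lambda>\<sigma>. chi_tensor i (block k \<circ> \<sigma>)"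
  have "finite P"
    by (rule finite_subset[of _ "{1..i} \<rightarrow>\<^sub>E A"]) (auto simp: P_def finite_PiE assms(1))
  have "(\<Sum>x\<in>A. phi_tilde k i A x (block k x)) = (\<Sum>x\<in>A. \<Sum>\<sigma>\<in>P. if x \<in> {\<sigma> (i - 1), \<sigma> i} then ?H \<sigma> else 0)"
  proof (rule sum.cong[OF refl])
    fix x assume "x \<in> A"
    have "arrangements i A x = P \<inter> {\<sigma>. x \<in> {\<sigma> (i - 1), \<sigma> i}}"
      by (auto simp: arrangements_def P_def)
    then have "phi_tilde k i A x (block k x) = (\<Sum>\<sigma>\<in>P \<inter> {\<sigma>. x \<in> {\<sigma> (i - 1), \<sigma> i}}. ?H \<sigma>)"
      using phi_tilde_eq_sum_arrangements[OF \<open>x \<in> A\<close> assms(2)] by simp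
    then show "phi_tilde k i A x (block k x) = (\<Sum>\<sigma>\<in>P. if x \<in> {\<sigma> (i - 1), \<sigma> i} then ?H \<sigma> else 0)"
      using \<open>finite P\<close> by (simp add: sum.inter_restrict)
  qed
  also have "\<dots> = (\<Sum>\<sigma>\<in>P. \<Sum>x\<in>A \<inter> {\<sigma> (i - 1), \<sigma> i}. ?H \<sigma>)"
    by (subst sum.swap) (simp only: sum.inter_restrict[OF assms(1)])
  also have "\<dots> = (\<Sum>\<sigma>\<in>P. ?H \<sigma> + ?H \<sigma>)"
  proof (rule sum.cong[OF refl])
    fix \<sigma> assume "\<sigma> \<in> P"
    then have bij: "bij_betw \<sigma> {1..i} A" by (simp add: P_def)
    have ends: "i - 1 \<in> {1..i}" "i \<in> {1..i}" "i - 1 \<noteq> i" using assms(2) by auto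
    have "A \<inter> {\<sigma> (i - 1), \<sigma> i} = {\<sigma> (i - 1), \<sigma> i}"
      using bij_betw_apply[OF bij] ends by blast
    moreover have "\<sigma> (i - 1) \<noteq> \<sigma> i"
      using bij_betw_imp_inj_on[OF bij] ends by (metis inj_onD)
    ultimately show "(\<Sum>x\<in>A \<inter> {\<sigma> (i - 1), \<sigma> i}. ?H \<sigma>) = ?H \<sigma> + ?H \<sigma>" by simp
  qed
  also have "\<dots> = 0"
    by (simp only: fun_bit_add_self sum.neutral_const)
  finally show ?thesis .
qed

lemma phi_tilde_unit_tuple:
  assumes "finite A" "x \<in> A" "t \<in> block k x" "i \<ge> 2"
    and \<sigma>\<^sub>0: "bij_betw \<sigma>\<^sub>0 {1..i} A\<^sub>0" and y: "\<And>s. s \<in> {1..i} \<Longrightarrow> y s \<in> block k (\<sigma>\<^sub>0 s)"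
  shows "phi_tilde k i A x {t} (unit_tuple y)
    = of_bool (A = A\<^sub>0 \<and> (\<sigma>\<^sub>0 (i - 1) = x \<or> \<sigma>\<^sub>0 i = x) \<and> (\<forall>s\<in>{1..i}. \<sigma>\<^sub>0 s = x \<longrightarrow> y s = t))"
proof -
  define \<sigma>\<^sub>1 where "\<sigma>\<^sub>1 = restrict \<sigma>\<^sub>0 {1..i}"
  define fits where "fits \<sigma> \<longleftrightarrow> (\<forall>s\<in>{1..i}. y s \<in> ((block k)(x := {t}) \<circ> \<sigma>) s)" for \<sigma>
  have unique: "\<sigma> = \<sigma>\<^sub>1" if "\<sigma> \<in> arrangements i A x" "fits \<sigma>" for \<sigma>
  proof
    fix s show "\<sigma> s = \<sigma>\<^sub>1 s"
    proof (cases "s \<in> {1..i}")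
      case True
      have "y s \<in> ((block k)(x := {t}) \<circ> \<sigma>) s"
        using that(2) True by (simp only: fits_def)
      then have "y s \<in> block k (\<sigma> s)"
        using assms(3) by (cases "\<sigma> s = x") auto
      then show ?thesis
        using y[OF True] True by (simp add: \<sigma>\<^sub>1_def block_disjoint)
    next
      case False
      then show ?thesis
        using that(1) by (auto simp: arrangements_def \<sigma>\<^sub>1_def PiE_def extensional_def)
    qed
  qed
  have "phi_tilde k i A x {t} (unit_tuple y) = (\<Sum>\<sigma>\<in>arrangements i A x. of_bool (fits \<sigma>))"
    using assms(2,4) by (simp add: phi_tilde_eq_sum_arrangements sum_fun_apply chi_tensor_unit_tuple fits_def)
  also have "\<dots> = (\<Sum>\<sigma>\<in>arrangements i A x. if \<sigma> = \<sigma>\<^sub>1 then of_bool (fits \<sigma>\<^sub>1) else 0)"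
    using unique by (intro sum.cong) auto
  also have "\<dots> = of_bool (\<sigma>\<^sub>1 \<in> arrangements i A x \<and> fits \<sigma>\<^sub>1)"
    using finite_arrangements[OF assms(1)] by simp
  also have "\<sigma>\<^sub>1 \<in> arrangements i A x \<longleftrightarrow> A = A\<^sub>0 \<and> (\<sigma>\<^sub>0 (i - 1) = x \<or> \<sigma>\<^sub>0 i = x)"
  proof -
    have "bij_betw \<sigma>\<^sub>1 {1..i} A \<longleftrightarrow> bij_betw \<sigma>\<^sub>0 {1..i} A"
      by (rule bij_betw_cong) (simp add: \<sigma>\<^sub>1_def)
    also have "\<dots> \<longleftrightarrow> A = A\<^sub>0"
      using \<sigma>\<^sub>0 by (auto simp: bij_betw_def)
    moreover have "\<sigma>\<^sub>1 \<in> {1..i} \<rightarrow>\<^sub>E A\<^sub>0"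
      using bij_betw_imp_funcset[OF \<sigma>\<^sub>0] by (simp add: \<sigma>\<^sub>1_def)
    ultimately show ?thesis
      using assms(4) by (auto simp: arrangements_def \<sigma>\<^sub>1_def)
  qed
  also have "fits \<sigma>\<^sub>1 \<longleftrightarrow> (\<forall>s\<in>{1..i}. \<sigma>\<^sub>0 s = x \<longrightarrow> y s = t)"
    using y by (auto simp: fits_def \<sigma>\<^sub>1_def)
  finally show ?thesis by (simp only: conj_assoc)
qed

lemma exists_arrangement_ending_with:
  assumes "finite A" "card A = i" "u \<in> A" "v \<in> A" "u \<noteq> v"
  obtains \<sigma> where "bij_betw \<sigma> {1..i} A" "\<sigma> (i - 1) = u" "\<sigma> i = v"
proof -
  define M where "M = A - {u, v}"
  have i_ge_2: "i \<ge> 2" and card_M: "card M = i - 2"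
    using assms card_mono[of A "{u, v}"] by (auto simp: M_def card_Diff_subset)
  obtain \<beta> where \<beta>: "bij_betw \<beta> {1..i - 2} M"
    using ex_bij_betw_nat_finite_1[of M] assms(1) card_M by (auto simp: M_def)
  define \<sigma> where "\<sigma> = \<beta>(i - 1 := u, i := v)"
  have "bij_betw \<sigma> {1..i - 2} M"
    using \<beta> by (rule bij_betw_cong[THEN iffD1, rotated]) (auto simp: \<sigma>_def)
  moreover have "bij_betw \<sigma> {i - 1, i} {u, v}"
    using i_ge_2 assms(5) by (auto simp: \<sigma>_def bij_betw_def)
  moreover have "M \<inter> {u, v} = {}" "{1..i - 2} \<union> {i - 1, i} = {1..i}" "M \<union> {u, v} = A"
    using i_ge_2 assms(3,4) by (auto simp: M_def)
  ultimately have "bij_betw \<sigma> {1..i} A"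
    using bij_betw_combine by metis
  then show ?thesis
    by (rule that) (use i_ge_2 in \<open>auto simp: \<sigma>_def\<close>)
qed

definition subsets_of_card :: "nat \<Rightarrow> nat \<Rightarrow> nat set set" where
  "subsets_of_card n i = {A. A \<subseteq> {1..n} \<and> card A = i}"

lemma finite_subsets_of_card: "finite (subsets_of_card n i)"
  by (rule finite_subset[of _ "Pow {1..n}"]) (auto simp: subsets_of_card_def)

lemma subsets_of_cardD:
  assumes "A \<in> subsets_of_card n i"
  shows "finite A" "A \<subseteq> {1..n}" "card A = i"
  using assms by (auto simp: subsets_of_card_def intro: finite_subset)

definition pivot :: "(nat \<Rightarrow> nat) \<Rightarrow> nat set \<Rightarrow> nat \<times> nat" where
  "pivot k A = (Min A, block_start k (Min A))"

lemma pivot_mem: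
  assumes "\<forall>h\<in>{1..n}. k h \<ge> 1" "i \<ge> 1" "A \<in> subsets_of_card n i"
  shows "pivot k A \<in> (SIGMA x:A. block k x)"
proof -
  have "A \<noteq> {}" "finite A" "A \<subseteq> {1..n}"
    using subsets_of_cardD[OF assms(3)] assms(2) by auto
  then have "Min A \<in> A" by simp
  with \<open>A \<subseteq> {1..n}\<close> have "Min A \<in> {1..n}" by blast
  with \<open>Min A \<in> A\<close> show ?thesis
    using assms(1) by (simp add: pivot_def block_start_mem)
qed

definition triples :: "(nat \<Rightarrow> nat) \<Rightarrow> nat \<Rightarrow> nat \<Rightarrow> (nat set \<times> nat \<times> nat) set" where
  "triples k n i = (SIGMA A:subsets_of_card n i. SIGMA x:A. block k x)"

text \<open>A triple (A, x, t) stands for \<phi>~(A,x,{t}); the relation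
  \<open>sum_phi_tilde_blocks_eq_0\<close> costs one generator per A, the pivot.\<close>

definition basis_triples :: "(nat \<Rightarrow> nat) \<Rightarrow> nat \<Rightarrow> nat \<Rightarrow> (nat set \<times> nat \<times> nat) set" where
  "basis_triples k n i = (SIGMA A:subsets_of_card n i. (SIGMA x:A. block k x) - {pivot k A})"

definition phi_triple :: "(nat \<Rightarrow> nat) \<Rightarrow> nat \<Rightarrow> nat set \<times> nat \<times> nat \<Rightarrow> mlmap" where
  "phi_triple k i = (\<lambda>(A, x, t). phi_tilde k i A x {t})"

lemma finite_triples: "finite (triples k n i)"
  unfolding triples_def using finite_subsets_of_card subsets_of_cardD(1)
  by (intro finite_SigmaI) auto

lemma basis_triples_subset: "basis_triples k n i \<subseteq> triples k n i"
  by (auto simp: basis_triples_def triples_def)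

text \<open>Choose y along an arrangement of A0 ending with u, v; since the blocks are disjoint,
  that arrangement is the only one contributing to any generator.\<close>

lemma exists_separating_unit_tuple:
  assumes kpos: "\<forall>h\<in>{1..n}. k h \<ge> 1"
    and A\<^sub>0: "A\<^sub>0 \<in> subsets_of_card n i" and uv: "u \<in> A\<^sub>0" "v \<in> A\<^sub>0" "u \<noteq> v"
    and ab: "a \<in> block k u" "b \<in> block k v"
  obtains y where "\<And>q. q \<in> triples k n i \<Longrightarrow>
    phi_triple k i q (unit_tuple y) = of_bool (q = (A\<^sub>0, u, a) \<or> q = (A\<^sub>0, v, b))"
proof -
  note A\<^sub>0_props = subsets_of_cardD[OF A\<^sub>0]
  obtain \<sigma>\<^sub>0 where \<sigma>\<^sub>0: "bij_betw \<sigma>\<^sub>0 {1..i} A\<^sub>0" "\<sigma>\<^sub>0 (i - 1) = u" "\<sigma>\<^sub>0 i = v"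
    using exists_arrangement_ending_with[OF A\<^sub>0_props(1,3) uv] by blast
  have i_ge_2: "i \<ge> 2"
    using card_mono[OF A\<^sub>0_props(1), of "{u, v}"] uv A\<^sub>0_props(3) by simp
  define y where "y s = (if s = i - 1 then a else if s = i then b else block_start k (\<sigma>\<^sub>0 s))" for s
  have y: "y s \<in> block k (\<sigma>\<^sub>0 s)" if "s \<in> {1..i}" for s
  proof -
    have "\<sigma>\<^sub>0 s \<in> {1..n}"
      using bij_betw_apply[OF \<sigma>\<^sub>0(1) that] A\<^sub>0_props(2) by blast
    then show ?thesis
      using kpos ab \<sigma>\<^sub>0(2,3) by (auto simp: y_def block_start_mem)
  qed
  have position: "\<sigma>\<^sub>0 s = u \<longleftrightarrow> s = i - 1" "\<sigma>\<^sub>0 s = v \<longleftrightarrow> s = i" if "s \<in> {1..i}" for s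
    using bij_betw_imp_inj_on[OF \<sigma>\<^sub>0(1)] \<sigma>\<^sub>0(2,3) that i_ge_2 by (auto dest: inj_onD)
  show ?thesis
  proof (rule that)
    fix q assume "q \<in> triples k n i"
    then obtain A x t where q: "q = (A, x, t)" "A \<in> subsets_of_card n i" "x \<in> A" "t \<in> block k x"
      by (auto simp: triples_def)
    have "phi_triple k i q (unit_tuple y)
        = of_bool (A = A\<^sub>0 \<and> (\<sigma>\<^sub>0 (i - 1) = x \<or> \<sigma>\<^sub>0 i = x) \<and> (\<forall>s\<in>{1..i}. \<sigma>\<^sub>0 s = x \<longrightarrow> y s = t))"
      using phi_tilde_unit_tuple[OF subsets_of_cardD(1)[OF q(2)] q(3,4) i_ge_2 \<sigma>\<^sub>0(1) y]
      by (simp add: phi_triple_def q(1))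
    also have "(\<forall>s\<in>{1..i}. \<sigma>\<^sub>0 s = u \<longrightarrow> y s = t) \<longleftrightarrow> t = a"
      using position i_ge_2 by (auto simp: y_def)
    moreover have "(\<forall>s\<in>{1..i}. \<sigma>\<^sub>0 s = v \<longrightarrow> y s = t) \<longleftrightarrow> t = b"
      using position i_ge_2 by (auto simp: y_def)
    ultimately show "phi_triple k i q (unit_tuple y) = of_bool (q = (A\<^sub>0, u, a) \<or> q = (A\<^sub>0, v, b))"
      using \<sigma>\<^sub>0(2,3) uv(3) q(1) by auto
  qed
qed

lemma vanishing_combination_coefficients_eq:
  assumes kpos: "\<forall>h\<in>{1..n}. k h \<ge> 1"
    and zero: "\<And>sig. (\<Sum>q\<in>triples k n i. c q * phi_triple k i q sig) = 0"
    and A: "A \<in> subsets_of_card n i" and uv: "u \<in> A" "v \<in> A" "u \<noteq> v"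
    and ab: "a \<in> block k u" "b \<in> block k v"
  shows "c (A, u, a) = c (A, v, b)"
proof -
  obtain y where y: "\<And>q. q \<in> triples k n i \<Longrightarrow>
      phi_triple k i q (unit_tuple y) = of_bool (q = (A, u, a) \<or> q = (A, v, b))"
    using exists_separating_unit_tuple[OF kpos A uv ab] by blast
  have "0 = (\<Sum>q\<in>triples k n i. c q * phi_triple k i q (unit_tuple y))"
    using zero by simp
  also have "\<dots> = (\<Sum>q\<in>triples k n i. c q * of_bool (q = (A, u, a) \<or> q = (A, v, b)))"
    by (rule sum.cong) (simp_all only: y)
  also have "\<dots> = (\<Sum>q\<in>triples k n i \<inter> {q. q = (A, u, a) \<or> q = (A, v, b)}. c q)"
    using finite_triples by (rule sum_mult_of_bool_eq)
  also have "triples k n i \<inter> {q. q = (A, u, a) \<or> q = (A, v, b)} = {(A, u, a), (A, v, b)}"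
    using A uv ab by (auto simp: triples_def)
  also have "(\<Sum>q\<in>{(A, u, a), (A, v, b)}. c q) = c (A, u, a) + c (A, v, b)"
    using uv(3) by simp
  finally have "c (A, u, a) + c (A, v, b) = 0"
    by (rule sym)
  then show ?thesis
    by (rule bit_eq_if_add_eq_0)
qed

lemma basis_triples_coefficients_vanish:
  assumes kpos: "\<forall>h\<in>{1..n}. k h \<ge> 1" and i_ge_2: "i \<ge> 2"
    and zero: "\<And>sig. (\<Sum>q\<in>basis_triples k n i. c q * phi_triple k i q sig) = 0"
    and q: "q \<in> basis_triples k n i"
  shows "c q = 0"
proof -
  define c' where "c' q = (if q \<in> basis_triples k n i then c q else 0)" for q
  have "(\<Sum>q\<in>triples k n i. c' q * phi_triple k i q sig) = 0" for sig
  proof -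
    have "(\<Sum>q\<in>triples k n i. c' q * phi_triple k i q sig)
        = (\<Sum>q\<in>basis_triples k n i. c q * phi_triple k i q sig)"
      using finite_triples basis_triples_subset
      by (intro sum.mono_neutral_cong_right) (auto simp: c'_def)
    then show ?thesis using zero by simp
  qed
  note equal = vanishing_combination_coefficients_eq[OF kpos this]
  obtain A x t where q': "q = (A, x, t)" "A \<in> subsets_of_card n i" "x \<in> A" "t \<in> block k x"
    using q by (auto simp: basis_triples_def)
  obtain x\<^sub>0 t\<^sub>0 where pivot: "pivot k A = (x\<^sub>0, t\<^sub>0)" "x\<^sub>0 \<in> A" "t\<^sub>0 \<in> block k x\<^sub>0"
    using pivot_mem[OF kpos _ q'(2)] i_ge_2 by (cases "pivot k A") auto
  have "c' (A, x\<^sub>0, t\<^sub>0) = 0"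
    using pivot(1) by (simp add: c'_def basis_triples_def)
  moreover have "c' q = c' (A, x\<^sub>0, t\<^sub>0)"
  proof (cases "x = x\<^sub>0")
    case False
    then show ?thesis
      using equal[OF q'(2,3) pivot(2) False q'(4) pivot(3)] q'(1) by simp
  next
    case True
    have "\<not> A \<subseteq> {x}"
      using subsets_of_cardD[OF q'(2)] i_ge_2 card_mono[of "{x}" A] by auto
    then obtain x' where x': "x' \<in> A" "x' \<noteq> x" by blast
    have "x' \<in> {1..n}"
      using subsets_of_cardD(2)[OF q'(2)] x'(1) by blast
    then have "block_start k x' \<in> block k x'"
      using kpos by (simp add: block_start_mem)
    then show ?thesis
      using equal[OF q'(2,3) x'(1) x'(2)[symmetric] q'(4)]
        equal[OF q'(2) x'(1) pivot(2) _ _ pivot(3)] x'(2) True q'(1) by simp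
  qed
  ultimately show ?thesis
    using q by (simp add: c'_def)
qed

lemma phi_tilde_singleton_eq_sum_others:
  assumes "finite A" "i \<ge> 2" "(x\<^sub>0, t\<^sub>0) \<in> (SIGMA x:A. block k x)"
  shows "phi_tilde k i A x\<^sub>0 {t\<^sub>0}
    = (\<Sum>(x, t)\<in>(SIGMA x:A. block k x) - {(x\<^sub>0, t\<^sub>0)}. phi_tilde k i A x {t})"
proof -
  let ?S = "SIGMA x:A. block k x"
  have "(\<Sum>(x, t)\<in>?S. phi_tilde k i A x {t}) = (\<Sum>x\<in>A. \<Sum>t\<in>block k x. phi_tilde k i A x {t})"
    by (rule sum.Sigma[symmetric]) (simp_all add: assms(1))
  also have "\<dots> = (\<Sum>x\<in>A. phi_tilde k i A x (block k x))"
    using assms(2) by (intro sum.cong refl phi_tilde_eq_sum_singletons[symmetric]) simp_all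
  also have "\<dots> = 0"
    using assms(1,2) by (rule sum_phi_tilde_blocks_eq_0)
  finally have "(\<Sum>(x, t)\<in>?S. phi_tilde k i A x {t}) = 0" .
  moreover have "(\<Sum>(x, t)\<in>?S. phi_tilde k i A x {t})
      = phi_tilde k i A x\<^sub>0 {t\<^sub>0} + (\<Sum>(x, t)\<in>?S - {(x\<^sub>0, t\<^sub>0)}. phi_tilde k i A x {t})"
    using assms(1,3) by (subst sum.remove) auto
  ultimately have "phi_tilde k i A x\<^sub>0 {t\<^sub>0}
      + (\<Sum>(x, t)\<in>?S - {(x\<^sub>0, t\<^sub>0)}. phi_tilde k i A x {t}) = 0"
    by metis
  then show ?thesis
    by (rule fun_bit_eq_if_add_eq_0)
qed

lemma Gov_tilde_eq_span_basis:
  assumes kpos: "\<forall>h\<in>{1..n}. k h \<ge> 1" and i_ge_2: "i \<ge> 2"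
  shows "Gov_tilde k n i = mlmaps.span (phi_triple k i ` basis_triples k n i)"
proof -
  let ?G = "{phi_tilde k i A x T | A x T. A \<subseteq> {1..n} \<and> card A = i \<and> x \<in> A \<and> T \<subseteq> block k x}"
  let ?B = "phi_triple k i ` basis_triples k n i"
  have basis: "phi_tilde k i A x {t} \<in> mlmaps.span ?B"
    if "(A, x, t) \<in> basis_triples k n i" for A x t
    using that by (intro mlmaps.span_base) (force simp: phi_triple_def)
  have singleton: "phi_tilde k i A x {t} \<in> mlmaps.span ?B"
    if A: "A \<in> subsets_of_card n i" and xt: "(x, t) \<in> (SIGMA x:A. block k x)" for A x t
  proof (cases "(x, t) = pivot k A")
    case True
    then have "phi_tilde k i A x {t}
        = (\<Sum>(x', t')\<in>(SIGMA x:A. block k x) - {pivot k A}. phi_tilde k i A x' {t'})"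
      using phi_tilde_singleton_eq_sum_others[OF subsets_of_cardD(1)[OF A] i_ge_2 xt] by simp
    also have "\<dots> \<in> mlmaps.span ?B"
      using A basis by (intro mlmaps.span_sum) (auto simp: basis_triples_def)
    finally show ?thesis .
  next
    case False
    then show ?thesis using A xt basis by (simp add: basis_triples_def)
  qed
  have generator: "phi_tilde k i A x T \<in> mlmaps.span ?B"
    if A: "A \<subseteq> {1..n}" "card A = i" "x \<in> A" "T \<subseteq> block k x" for A x T
  proof -
    have "phi_tilde k i A x T = (\<Sum>t\<in>T. phi_tilde k i A x {t})"
      using A i_ge_2 by (intro phi_tilde_eq_sum_singletons) (auto intro: finite_subset)
    also have "\<dots> \<in> mlmaps.span ?B"
      using A singleton by (intro mlmaps.span_sum) (auto simp: subsets_of_card_def)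
    finally show ?thesis .
  qed
  have "?G \<subseteq> mlmaps.span ?B"
    using generator by blast
  moreover have "?B \<subseteq> mlmaps.span ?G"
  proof clarify
    fix A x t assume "(A, x, t) \<in> basis_triples k n i"
    then have "phi_triple k i (A, x, t) \<in> ?G"
      by (auto simp: phi_triple_def basis_triples_def subsets_of_card_def)
    then show "phi_triple k i (A, x, t) \<in> mlmaps.span ?G"
      by (rule mlmaps.span_base)
  qed
  ultimately show ?thesis
    unfolding Gov_tilde_def by (simp only: mlmaps.span_eq)
qed

lemma card_basis_triples:
  assumes kpos: "\<forall>h\<in>{1..n}. k h \<ge> 1" and i_ge_2: "i \<ge> 2"
  shows "int (card (basis_triples k n i))
    = int (\<Sum>h\<in>{1..n}. k h) * int ((n - 1) choose (i - 1)) - int (n choose i)"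
proof -
  have per_subset: "int (card ((SIGMA x:A. block k x) - {pivot k A})) = int (\<Sum>x\<in>A. k x) - 1"
    if A: "A \<in> subsets_of_card n i" for A
  proof -
    let ?S = "SIGMA x:A. block k x"
    note A_props = subsets_of_cardD[OF A]
    have card_S: "card ?S = (\<Sum>x\<in>A. k x)"
      using A_props(1,2) by (auto simp: card_SigmaI card_block intro!: sum.cong)
    have pivot: "pivot k A \<in> ?S"
      using pivot_mem[OF kpos _ A] i_ge_2 by simp
    moreover have "finite ?S"
      using A_props(1) by simp
    ultimately have "card ?S \<noteq> 0"
      using card_0_eq by blast
    then show ?thesis
      using card_Diff_singleton[OF pivot] card_S by (simp add: of_nat_diff)
  qed
  have "int (card (basis_triples k n i)) = (\<Sum>A\<in>subsets_of_card n i. int (\<Sum>x\<in>A. k x) - 1)"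
    unfolding basis_triples_def using finite_subsets_of_card subsets_of_cardD(1)
    by (simp add: card_SigmaI per_subset of_nat_sum)
  also have "\<dots> = int (\<Sum>A\<in>subsets_of_card n i. \<Sum>x\<in>A. k x) - int (card (subsets_of_card n i))"
    by (simp add: sum_subtractf of_nat_sum)
  also have "\<dots> = int (\<Sum>h\<in>{1..n}. k h) * int ((n - 1) choose (i - 1)) - int (n choose i)"
    using sum_sum_subsets_of_card[of "{1..n}" i k] n_subsets[of "{1..n}" i] i_ge_2
    by (simp add: subsets_of_card_def)
  finally show ?thesis .
qed

theorem proposition2p6:
  fixes n i :: nat and k :: "nat \<Rightarrow> nat"
  assumes "\<forall>h\<in>{1..n}. k h \<ge> 1"
    and "i \<ge> 2"
  shows "int (vector_space.dim mscale (Gov_tilde k n i))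
         = int (\<Sum>h\<in>{1..n}. k h) * int ((n - 1) choose (i - 1)) - int (n choose i)"
proof -
  let ?J = "basis_triples k n i" and ?g = "phi_triple k i"
  have "finite ?J"
    using finite_triples basis_triples_subset by (rule finite_subset[rotated])
  moreover have "\<forall>q\<in>?J. c q = 0" if "(\<Sum>q\<in>?J. mscale (c q) (?g q)) = 0" for c
    using basis_triples_coefficients_vanish[OF assms, of c] fun_cong[OF that]
    by (simp add: sum_fun_apply mscale_def)
  ultimately have inj: "inj_on ?g ?J" and indep: "mlmaps.independent (?g ` ?J)"
    using mlmaps.inj_on_and_independent_image by blast+
  have span: "mlmaps.span (?g ` ?J) = mlmaps.span (Gov_tilde k n i)"
    using Gov_tilde_eq_span_basis[OF assms] by (simp add: mlmaps.span_span)
  have "vector_space.dim mscale (Gov_tilde k n i) = card (?g ` ?J)"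
    using span indep by (rule mlmaps.dim_eq_card)
  also have "\<dots> = card ?J"
    using inj by (rule card_image)
  finally show ?thesis
    using card_basis_triples[OF assms] by simp
qed

end
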